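(* Fix integers $1\le k\le n$. Then $(k-1)(n-k)$ is the maximal number of alignments of a permutation $\pi\in S_n$ with exactly $k$ weak excedences, and the number of permutations in $S_n$ with exactly $k$ weak excedences and exactly $(k-1)(n-k)$ alignments is the Narayana number $N_{k,n}=\frac1n\binom{n}{k}\binom{n}{k-1}$.
   Context: Place $1,\dots,n$ clockwise on a circle. Distinct $p_1,\dots,p_m$ are in clockwise cyclic order if $(p_2-p_1)\bmod n<\dots<(p_m-p_1)\bmod n$ (residues in $\{0,\dots,n-1\}$). For $\pi\in S_n$ (fixed points regarded as "counterclockwise loops"), an ordered pair $(i,j)$, $i\ne j$, is aligned if $\pi(j)\ne j$, the entries of $(i,\pi(i),\pi(j),j)$ are pairwise distinct except that possibly $i=\pi(i)$, and the distinct entries in this order are in clockwise cyclic order. An alignment is an unordered pair $\{i,j\}$ with $(i,j)$ or $(j,i)$ aligned. A weak excedence of $\pi$ is an $i$ with $\pi(i)\ge i$. *)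

theory Defs
  imports Complex_Main "HOL-Combinatorics.Permutations"
begin

text \<open>Points 1..n on a circle. A list of distinct points is in clockwise cyclic order
if the residues (p_k - p_1) mod n, k = 2..m, are strictly increasing.\<close>
definition cw_order :: "nat \<Rightarrow> nat list \<Rightarrow> bool" where
  "cw_order n ps \<longleftrightarrow> distinct ps \<and>
     sorted_wrt (<) (map (\<lambda>p. (int p - int (hd ps)) mod int n) (tl ps))"

text \<open>Ordered pair (i,j) aligned for pi (fixed points are counterclockwise loops).\<close>
definition aligned :: "nat \<Rightarrow> (nat \<Rightarrow> nat) \<Rightarrow> nat \<Rightarrow> nat \<Rightarrow> bool" where
  "aligned n \<pi> i j \<longleftrightarrow> i \<noteq> j \<and> \<pi> j \<noteq> j \<and>
     distinct [i, \<pi> j, j] \<and> distinct [\<pi> i, \<pi> j, j] \<and>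
     cw_order n (if i = \<pi> i then [i, \<pi> j, j] else [i, \<pi> i, \<pi> j, j])"

definition alignments :: "nat \<Rightarrow> (nat \<Rightarrow> nat) \<Rightarrow> nat set set" where
  "alignments n \<pi> = {{i, j} | i j. i \<in> {1..n} \<and> j \<in> {1..n} \<and>
       (aligned n \<pi> i j \<or> aligned n \<pi> j i)}"

definition num_alignments :: "nat \<Rightarrow> (nat \<Rightarrow> nat) \<Rightarrow> nat" where
  "num_alignments n \<pi> = card (alignments n \<pi>)"

definition weak_excedences :: "nat \<Rightarrow> (nat \<Rightarrow> nat) \<Rightarrow> nat set" where
  "weak_excedences n \<pi> = {i \<in> {1..n}. \<pi> i \<ge> i}"

definition narayana :: "nat \<Rightarrow> nat \<Rightarrow> real" where
  "narayana k n = (1 / real n) * real (n choose k) * real (n choose (k - 1))"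

end

theory Submission
  imports Defs
begin

(* Every permutation of {1..n+1} arises uniquely from a permutation \<pi> of {1..n} by inserting
   n+1 into a cycle right after some a (a new fixed point when a = n+1). Consider the deficiency
   D(\<pi>) = (k-1)(n-k) - al(\<pi>), where k is the number of weak excedences. Creating a fixed point
   leaves D unchanged, and inserting after a \<le> n adds to D a sum of nonnegative contributions,
   one for each point x; so D \<ge> 0 by induction. Moreover D stays 0 exactly when a is a weak
   excedence at which \<pi> a is a left-to-right maximum (an admissible site), and the admissible
   sites after the insertion are a together with the admissible sites of \<pi> to the left of a.
   Hence the number T(n,k,v) of permutations with D = 0, k weak excedences and v admissible
   sites satisfies T(n+1,k,j) = sum_{v \<ge> j} T(n,k,v) + T(n,k-1,j-1), which is solved by
   T(n,k,v) = (v/n) C(n,k) C(n-v-1,k-v); summing over v gives the Narayana number. *)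

lemma sum_sum_change_row_col:
  fixes f g :: "'a \<Rightarrow> 'a \<Rightarrow> 'b::comm_ring"
  assumes A: "finite A" "a \<in> A"
    and fg: "\<And>i j. i \<in> A \<Longrightarrow> j \<in> A \<Longrightarrow> i \<noteq> a \<Longrightarrow> j \<noteq> a \<Longrightarrow> f i j = g i j"
  shows "(\<Sum>i\<in>A. \<Sum>j\<in>A. f i j) = (\<Sum>i\<in>A. \<Sum>j\<in>A. g i j)
           + (\<Sum>x\<in>A. f a x - g a x) + (\<Sum>x\<in>A. if x = a then 0 else f x a - g x a)"
proof -
  have "(\<Sum>i\<in>A. \<Sum>j\<in>A. if i = a then f a j - g a j else 0)
      = (\<Sum>i\<in>A. if i = a then (\<Sum>x\<in>A. f a x - g a x) else 0)"
    by (intro sum.cong refl) simp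
  then have row: "(\<Sum>i\<in>A. \<Sum>j\<in>A. if i = a then f a j - g a j else 0) = (\<Sum>x\<in>A. f a x - g a x)"
    by (simp add: sum.delta A)
  have col: "(\<Sum>i\<in>A. \<Sum>j\<in>A. if j = a \<and> i \<noteq> a then f i a - g i a else 0)
      = (\<Sum>x\<in>A. if x = a then 0 else f x a - g x a)"
  proof (intro sum.cong refl)
    fix i
    show "(\<Sum>j\<in>A. if j = a \<and> i \<noteq> a then f i a - g i a else 0) = (if i = a then 0 else f i a - g i a)"
      by (cases "i = a") (simp_all add: sum.delta A)
  qed
  have "(\<Sum>i\<in>A. \<Sum>j\<in>A. f i j) = (\<Sum>i\<in>A. \<Sum>j\<in>A. g i j
          + (if i = a then f a j - g a j else 0) + (if j = a \<and> i \<noteq> a then f i a - g i a else 0))"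
    using fg by (intro sum.cong) auto
  then show ?thesis by (simp only: sum.distrib row col)
qed

lemma card_rank_eq:
  fixes S :: "'a::linorder set"
  assumes S: "finite S"
  shows "card {a \<in> S. card (S \<inter> {..<a}) = m} = of_bool (m < card S)"
proof -
  define r where "r a = card (S \<inter> {..<a})" for a
  have r_less: "r b < r a" if "b \<in> S" "b < a" for a b
  proof -
    have "S \<inter> {..<b} \<subset> S \<inter> {..<a}" using that by auto
    then show ?thesis unfolding r_def using S by (simp add: psubset_card_mono)
  qed
  have "inj_on r S"
  proof (rule inj_onI)
    fix a b assume "a \<in> S" "b \<in> S" "r a = r b"
    then show "a = b" using r_less[of a b] r_less[of b a] by (cases a b rule: linorder_cases) auto
  qed
  moreover have "r a < card S" if "a \<in> S" for a
  proof -
    have "S \<inter> {..<a} \<subset> S" using that by auto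
    then show ?thesis unfolding r_def using S by (simp add: psubset_card_mono)
  qed
  ultimately have bij: "bij_betw r S {..<card S}"
    by (simp add: bij_betw_def card_image card_subset_eq image_subset_iff)
  have "r ` {a \<in> S. r a = m} = r ` S \<inter> {m}" by blast
  then have "r ` {a \<in> S. r a = m} = {..<card S} \<inter> {m}"
    using bij by (simp add: bij_betw_def)
  then have "bij_betw r {a \<in> S. r a = m} ({..<card S} \<inter> {m})"
    by (intro bij_betw_subset[OF bij]) auto
  then show ?thesis unfolding r_def[symmetric] by (simp add: bij_betw_same_card)
qed

definition aligned_lin :: "nat \<Rightarrow> nat \<Rightarrow> nat \<Rightarrow> nat \<Rightarrow> bool" where
  "aligned_lin i j p q \<longleftrightarrow>
     (j \<le> q \<and> q < p) \<or> (q < p \<and> p < i) \<or> (i \<le> p \<and> p < q \<and> q < j) \<or> (p < i \<and> j \<le> q)"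

lemma int_diff_mod_eq:
  assumes "h \<in> {1..n}" "p \<in> {1..n}"
  shows "(int p - int h) mod int n = (if h \<le> p then int p - int h else int p - int h + int n)"
proof (cases "h \<le> p")
  case False
  have "(int p - int h) mod int n = (int p - int h + int n) mod int n" by simp
  also have "\<dots> = int p - int h + int n" using assms False by (intro mod_pos_pos_trivial) auto
  finally show ?thesis using False by simp
qed (use assms in \<open>simp add: mod_pos_pos_trivial\<close>)

lemma aligned_either_iff_aligned_lin:
  assumes "i < j" "{i, j, \<pi> i, \<pi> j} \<subseteq> {1..n}" "\<pi> i \<noteq> \<pi> j"
  shows "aligned n \<pi> i j \<or> aligned n \<pi> j i \<longleftrightarrow> aligned_lin i j (\<pi> i) (\<pi> j)"
  using assms unfolding aligned_def cw_order_def aligned_lin_def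
  by (auto simp: int_diff_mod_eq split: if_splits)

definition alignment_ind :: "(nat \<Rightarrow> nat) \<Rightarrow> nat \<Rightarrow> nat \<Rightarrow> int" where
  "alignment_ind \<pi> i j = of_bool (i < j \<and> aligned_lin i j (\<pi> i) (\<pi> j))"

definition alignment_count :: "nat \<Rightarrow> (nat \<Rightarrow> nat) \<Rightarrow> int" where
  "alignment_count n \<pi> = (\<Sum>i\<in>{1..n}. \<Sum>j\<in>{1..n}. alignment_ind \<pi> i j)"

lemma num_alignments_eq_alignment_count:
  assumes \<pi>: "\<pi> permutes {1..n}"
  shows "int (num_alignments n \<pi>) = alignment_count n \<pi>"
proof -
  define R where "R = {(i, j) \<in> {1..n} \<times> {1..n}. i < j \<and> aligned_lin i j (\<pi> i) (\<pi> j)}"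
  have aligned_iff: "aligned n \<pi> i j \<or> aligned n \<pi> j i \<longleftrightarrow> aligned_lin i j (\<pi> i) (\<pi> j)"
    if "i < j" "i \<in> {1..n}" "j \<in> {1..n}" for i j
    using that aligned_either_iff_aligned_lin[of i j \<pi> n] permutes_in_image[OF \<pi>]
      permutes_inj[OF \<pi>, THEN injD, of i j] by auto
  have "alignments n \<pi> = (\<lambda>(i, j). {i, j}) ` R"
  proof (intro equalityI subsetI)
    fix s assume "s \<in> alignments n \<pi>"
    then obtain i j where s: "s = {i, j}" and ij: "i \<in> {1..n}" "j \<in> {1..n}"
      and al: "aligned n \<pi> i j \<or> aligned n \<pi> j i"
      unfolding alignments_def by blast
    have "i \<noteq> j" using al unfolding aligned_def by auto
    then consider "i < j" | "j < i" by linarith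
    then have "(i, j) \<in> R \<or> (j, i) \<in> R"
      by cases (use al ij aligned_iff[of i j] aligned_iff[of j i] in \<open>auto simp: R_def\<close>)
    then show "s \<in> (\<lambda>(i, j). {i, j}) ` R"
      unfolding s by (auto intro: rev_image_eqI simp: insert_commute)
  next
    fix s assume "s \<in> (\<lambda>(i, j). {i, j}) ` R"
    then obtain i j where "s = {i, j}" "i < j" "i \<in> {1..n}" "j \<in> {1..n}"
      "aligned_lin i j (\<pi> i) (\<pi> j)"
      unfolding R_def by auto
    then show "s \<in> alignments n \<pi>"
      unfolding alignments_def using aligned_iff by blast
  qed
  moreover have "inj_on (\<lambda>(i, j). {i, j}) R"
    by (rule inj_onI) (auto simp: R_def doubleton_eq_iff)
  ultimately have "num_alignments n \<pi> = card R"
    unfolding num_alignments_def by (simp add: card_image)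
  also have "int (card R) = (\<Sum>(i, j)\<in>{1..n} \<times> {1..n}. of_bool (i < j \<and> aligned_lin i j (\<pi> i) (\<pi> j)))"
    unfolding R_def by (simp add: case_prod_unfold Int_def) (auto intro!: arg_cong[where f = card])
  finally show ?thesis
    by (simp only: alignment_count_def alignment_ind_def sum.cartesian_product)
qed

lemma card_weak_excedences_eq_sum:
  "int (card (weak_excedences n \<pi>)) = (\<Sum>x\<in>{1..n}. of_bool (x \<le> \<pi> x))"
  by (simp add: weak_excedences_def Int_def)

(* In cycle notation, n+1 is inserted between a and \<pi> a. *)
definition cycle_insert :: "nat \<Rightarrow> (nat \<Rightarrow> nat) \<Rightarrow> nat \<Rightarrow> nat \<Rightarrow> nat" where
  "cycle_insert n \<pi> a = \<pi> \<circ> transpose a (Suc n)"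

lemma cycle_insert_apply:
  assumes "\<pi> permutes {1..n}"
  shows "cycle_insert n \<pi> a x = (if x = a then Suc n else if x = Suc n then \<pi> a else \<pi> x)"
  using permutes_not_in[OF assms, of "Suc n"] by (auto simp: cycle_insert_def transpose_def)

lemma cycle_insert_fixed: "cycle_insert n \<pi> (Suc n) = \<pi>"
  by (simp add: cycle_insert_def)

lemma cycle_insert_permutes:
  assumes "\<pi> permutes {1..n}" "a \<in> {1..Suc n}"
  shows "cycle_insert n \<pi> a permutes {1..Suc n}"
proof -
  have "\<pi> permutes {1..Suc n}" by (rule permutes_subset[OF assms(1)]) auto
  moreover have "transpose a (Suc n) permutes {1..Suc n}"
    using assms(2) by (intro permutes_swap_id) auto
  ultimately show ?thesis unfolding cycle_insert_def by (rule permutes_compose[rotated])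
qed

lemma cycle_insert_inj:
  assumes \<pi>: "\<pi> permutes {1..n}" and \<pi>': "\<pi>' permutes {1..n}"
    and a: "a \<in> {1..Suc n}" and a': "a' \<in> {1..Suc n}"
    and eq: "cycle_insert n \<pi> a = cycle_insert n \<pi>' a'"
  shows "\<pi> = \<pi>' \<and> a = a'"
proof -
  have "a = a'"
  proof (rule ccontr)
    assume "a \<noteq> a'"
    define c where "c = (if a = Suc n then a' else a)"
    have "cycle_insert n \<pi>' a' a = Suc n"
      using eq cycle_insert_apply[OF \<pi>, of a a] by simp
    then have "\<pi>' c = Suc n"
      using \<open>a \<noteq> a'\<close> by (simp add: c_def cycle_insert_apply[OF \<pi>'] split: if_splits)
    moreover have "c \<in> {1..n}" using a a' \<open>a \<noteq> a'\<close> by (auto simp: c_def)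
    ultimately show False using permutes_in_image[OF \<pi>', of c] by simp
  qed
  moreover have "\<pi> \<circ> transpose a (Suc n) \<circ> transpose a (Suc n) = \<pi>' \<circ> transpose a (Suc n) \<circ> transpose a (Suc n)"
    using eq \<open>a = a'\<close> by (simp add: cycle_insert_def)
  then have "\<pi> = \<pi>'" by (simp add: comp_assoc)
  ultimately show ?thesis by simp
qed

lemma permutes_Suc_eq_cycle_insert:
  assumes \<sigma>: "\<sigma> permutes {1..Suc n}"
  obtains \<pi> a where "\<pi> permutes {1..n}" "a \<in> {1..Suc n}" "\<sigma> = cycle_insert n \<pi> a"
proof
  define a where "a = inv \<sigma> (Suc n)"
  have \<sigma>a: "\<sigma> a = Suc n" unfolding a_def using permutes_inverses[OF \<sigma>] by simp
  show a: "a \<in> {1..Suc n}"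
    using permutes_in_image[OF permutes_inv[OF \<sigma>], of "Suc n"] unfolding a_def by simp
  have "\<sigma> \<circ> transpose a (Suc n) permutes {1..Suc n}"
    using a by (intro permutes_compose[rotated] \<sigma> permutes_swap_id) auto
  then show "\<sigma> \<circ> transpose a (Suc n) permutes {1..n}"
    by (rule permutes_superset) (auto simp: \<sigma>a le_Suc_eq)
  show "\<sigma> = cycle_insert n (\<sigma> \<circ> transpose a (Suc n)) a"
    by (simp add: cycle_insert_def comp_assoc)
qed

lemma bij_betw_cycle_insert:
  "bij_betw (\<lambda>(\<pi>, a). cycle_insert n \<pi> a)
     (SIGMA \<pi>:{\<pi>. \<pi> permutes {1..n}}. {1..Suc n}) {\<sigma>. \<sigma> permutes {1..Suc n}}"
proof (rule bij_betwI')
  fix \<sigma> assume "\<sigma> \<in> {\<sigma>. \<sigma> permutes {1..Suc n}}"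
  then obtain \<pi> a where "\<pi> permutes {1..n}" "a \<in> {1..Suc n}" "\<sigma> = cycle_insert n \<pi> a"
    using permutes_Suc_eq_cycle_insert by blast
  then show "\<exists>x\<in>SIGMA \<pi>:{\<pi>. \<pi> permutes {1..n}}. {1..Suc n}. \<sigma> = (case x of (\<pi>, a) \<Rightarrow> cycle_insert n \<pi> a)"
    by (intro bexI[of _ "(\<pi>, a)"]) auto
next
  fix x y assume "x \<in> (SIGMA \<pi>:{\<pi>. \<pi> permutes {1..n}}. {1..Suc n})"
    "y \<in> (SIGMA \<pi>:{\<pi>. \<pi> permutes {1..n}}. {1..Suc n})"
  then show "(case x of (\<pi>, a) \<Rightarrow> cycle_insert n \<pi> a) = (case y of (\<pi>, a) \<Rightarrow> cycle_insert n \<pi> a)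
      \<longleftrightarrow> x = y"
    using cycle_insert_inj by (auto simp only: mem_Sigma_iff split: prod.splits)
next
  fix x assume "x \<in> (SIGMA \<pi>:{\<pi>. \<pi> permutes {1..n}}. {1..Suc n})"
  then show "(case x of (\<pi>, a) \<Rightarrow> cycle_insert n \<pi> a) \<in> {\<sigma>. \<sigma> permutes {1..Suc n}}"
    using cycle_insert_permutes by auto
qed

lemma card_permutes_Suc_filter:
  "card {\<sigma>. \<sigma> permutes {1..Suc n} \<and> Q \<sigma>} =
     (\<Sum>\<pi> | \<pi> permutes {1..n}. card {a \<in> {1..Suc n}. Q (cycle_insert n \<pi> a)})"
proof -
  have "bij_betw (\<lambda>(\<pi>, a). cycle_insert n \<pi> a)
      {x \<in> SIGMA \<pi>:{\<pi>. \<pi> permutes {1..n}}. {1..Suc n}. Q (case x of (\<pi>, a) \<Rightarrow> cycle_insert n \<pi> a)}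
      {\<sigma> \<in> {\<sigma>. \<sigma> permutes {1..Suc n}}. Q \<sigma>}"
    by (rule bij_betw_Collect[OF bij_betw_cycle_insert]) simp
  moreover have "{x \<in> SIGMA \<pi>:{\<pi>. \<pi> permutes {1..n}}. {1..Suc n}. Q (case x of (\<pi>, a) \<Rightarrow> cycle_insert n \<pi> a)}
      = (SIGMA \<pi>:{\<pi>. \<pi> permutes {1..n}}. {a \<in> {1..Suc n}. Q (cycle_insert n \<pi> a)})"
    by auto
  ultimately have "card {\<sigma>. \<sigma> permutes {1..Suc n} \<and> Q \<sigma>}
      = card (SIGMA \<pi>:{\<pi>. \<pi> permutes {1..n}}. {a \<in> {1..Suc n}. Q (cycle_insert n \<pi> a)})"
    by (simp add: bij_betw_same_card)
  then show ?thesis by (simp add: finite_permutations)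
qed

lemma card_weak_excedences_cycle_insert:
  assumes \<pi>: "\<pi> permutes {1..n}" and a: "a \<in> {1..n}"
  shows "card (weak_excedences (Suc n) (cycle_insert n \<pi> a))
           = card (weak_excedences n \<pi>) + of_bool (\<pi> a < a)"
proof -
  have "\<pi> a \<in> {1..n}" using permutes_in_image[OF \<pi>] a by simp
  then have "weak_excedences (Suc n) (cycle_insert n \<pi> a) = insert a (weak_excedences n \<pi>)"
    using a by (auto simp: weak_excedences_def cycle_insert_apply[OF \<pi>])
  moreover have "finite (weak_excedences n \<pi>)" by (simp add: weak_excedences_def)
  moreover have "a \<in> weak_excedences n \<pi> \<longleftrightarrow> \<not> \<pi> a < a"
    using a by (auto simp: weak_excedences_def)
  ultimately show ?thesis by (simp add: card_insert_if)
qed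

lemma card_weak_excedences_cycle_insert_fixed:
  assumes \<pi>: "\<pi> permutes {1..n}"
  shows "card (weak_excedences (Suc n) (cycle_insert n \<pi> (Suc n))) = card (weak_excedences n \<pi>) + 1"
proof -
  have "weak_excedences (Suc n) \<pi> = insert (Suc n) (weak_excedences n \<pi>)"
    using permutes_not_in[OF \<pi>, of "Suc n"] by (auto simp: weak_excedences_def)
  moreover have "finite (weak_excedences n \<pi>)" "Suc n \<notin> weak_excedences n \<pi>"
    by (auto simp: weak_excedences_def)
  ultimately show ?thesis by (simp add: cycle_insert_fixed)
qed

lemma sum_non_weak_excedences:
  "(\<Sum>x\<in>{1..n}. of_bool (\<pi> x < x)) = int n - int (card (weak_excedences n \<pi>))"
proof -
  have "(\<Sum>x\<in>{1..n}. of_bool (\<pi> x < x)) = (\<Sum>x\<in>{1..n}. 1 - of_bool (x \<le> \<pi> x) :: int)"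
    by (intro sum.cong) auto
  then show ?thesis by (simp add: sum_subtractf card_weak_excedences_eq_sum del: sum_of_bool_eq)
qed

definition deficiency :: "nat \<Rightarrow> (nat \<Rightarrow> nat) \<Rightarrow> int" where
  "deficiency n \<pi> = (int (card (weak_excedences n \<pi>)) - 1) * (int n - int (card (weak_excedences n \<pi>)))
                     - alignment_count n \<pi>"

(* Inserting n+1 after a, with b = \<pi> a: the point x, with px = \<pi> x, contributes bound_gain to
   the growth of (k-1)(n-k) and alignment_gain to that of the alignment count (through its pairs
   with n+1 and with a); deficiency_gain is the difference. *)
definition bound_gain :: "nat \<Rightarrow> nat \<Rightarrow> nat \<Rightarrow> nat \<Rightarrow> int" where
  "bound_gain a b x px = (if b < a then of_bool (px < x) else of_bool (x \<le> px \<and> x \<noteq> a))"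

definition alignment_gain :: "nat \<Rightarrow> nat \<Rightarrow> nat \<Rightarrow> nat \<Rightarrow> nat \<Rightarrow> int" where
  "alignment_gain n a b x px =
     (if x = a then 0
      else of_bool (aligned_lin x (Suc n) px b)
        + (if a < x then of_bool (aligned_lin a x (Suc n) px) - of_bool (aligned_lin a x b px)
           else of_bool (aligned_lin x a px (Suc n)) - of_bool (aligned_lin x a px b)))"

definition deficiency_gain :: "nat \<Rightarrow> nat \<Rightarrow> nat \<Rightarrow> nat \<Rightarrow> int" where
  "deficiency_gain a b x px =
     (if b < a then of_bool (x = a) + 2 * of_bool (a < x \<and> px < b) else 2 * of_bool (x < a \<and> b < px))"

lemma deficiency_gain_nonneg: "deficiency_gain a b x px \<ge> 0"
  by (simp add: deficiency_gain_def)

lemma bound_gain_minus_alignment_gain: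
  assumes "{x, px, a, b} \<subseteq> {1..n}" "x = a \<longleftrightarrow> px = b"
  shows "bound_gain a b x px - alignment_gain n a b x px = deficiency_gain a b x px"
  using assms unfolding bound_gain_def alignment_gain_def deficiency_gain_def aligned_lin_def
  by auto

lemma sum_bound_gain:
  assumes \<pi>: "\<pi> permutes {1..n}" and a: "a \<in> {1..n}"
  shows "(\<Sum>x\<in>{1..n}. bound_gain a (\<pi> a) x (\<pi> x))
           = (if \<pi> a < a then int n - int (card (weak_excedences n \<pi>))
              else int (card (weak_excedences n \<pi>)) - 1)"
proof (cases "\<pi> a < a")
  case True
  then have "(\<Sum>x\<in>{1..n}. bound_gain a (\<pi> a) x (\<pi> x)) = (\<Sum>x\<in>{1..n}. of_bool (\<pi> x < x))"
    by (intro sum.cong) (auto simp: bound_gain_def)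
  with True show ?thesis by (simp only: sum_non_weak_excedences if_True)
next
  case False
  have "(\<Sum>x\<in>{1..n}. bound_gain a (\<pi> a) x (\<pi> x))
      = (\<Sum>x\<in>{1..n}. of_bool (x \<le> \<pi> x) - (if x = a then 1 else 0))"
    using False by (intro sum.cong) (auto simp: bound_gain_def)
  also have "\<dots> = int (card (weak_excedences n \<pi>)) - 1"
    using a by (simp add: sum_subtractf card_weak_excedences_eq_sum del: sum_of_bool_eq)
  finally show ?thesis using False by simp
qed

lemma alignment_count_Suc:
  "alignment_count (Suc n) \<sigma>
     = (\<Sum>i\<in>{1..n}. \<Sum>j\<in>{1..n}. alignment_ind \<sigma> i j) + (\<Sum>i\<in>{1..n}. alignment_ind \<sigma> i (Suc n))"
proof -
  have "{1..Suc n} = insert (Suc n) {1..n}" by auto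
  moreover have "alignment_ind \<sigma> (Suc n) j = 0" if "j \<in> {1..Suc n}" for j
    using that by (simp add: alignment_ind_def)
  ultimately show ?thesis by (simp add: alignment_count_def sum.distrib)
qed

lemma alignment_count_cycle_insert:
  assumes \<pi>: "\<pi> permutes {1..n}" and a: "a \<in> {1..n}"
  shows "alignment_count (Suc n) (cycle_insert n \<pi> a)
           = alignment_count n \<pi> + (\<Sum>x\<in>{1..n}. alignment_gain n a (\<pi> a) x (\<pi> x))"
proof -
  let ?\<sigma> = "cycle_insert n \<pi> a"
  have "(\<Sum>i\<in>{1..n}. \<Sum>j\<in>{1..n}. alignment_ind ?\<sigma> i j) = alignment_count n \<pi>
          + (\<Sum>x\<in>{1..n}. alignment_ind ?\<sigma> a x - alignment_ind \<pi> a x)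
          + (\<Sum>x\<in>{1..n}. if x = a then 0 else alignment_ind ?\<sigma> x a - alignment_ind \<pi> x a)"
    unfolding alignment_count_def
    by (rule sum_sum_change_row_col[OF _ a]) (auto simp: alignment_ind_def cycle_insert_apply[OF \<pi>])
  then have "alignment_count (Suc n) ?\<sigma> = alignment_count n \<pi> + (\<Sum>x\<in>{1..n}.
          alignment_ind ?\<sigma> x (Suc n) + (alignment_ind ?\<sigma> a x - alignment_ind \<pi> a x)
          + (if x = a then 0 else alignment_ind ?\<sigma> x a - alignment_ind \<pi> x a))"
    unfolding alignment_count_Suc by (simp add: sum.distrib)
  also have "(\<Sum>x\<in>{1..n}. alignment_ind ?\<sigma> x (Suc n) + (alignment_ind ?\<sigma> a x - alignment_ind \<pi> a x)
          + (if x = a then 0 else alignment_ind ?\<sigma> x a - alignment_ind \<pi> x a))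
      = (\<Sum>x\<in>{1..n}. alignment_gain n a (\<pi> a) x (\<pi> x))"
  proof (intro sum.cong refl)
    fix x assume x: "x \<in> {1..n}"
    have "\<not> aligned_lin a (Suc n) (Suc n) (\<pi> a)"
      using permutes_in_image[OF \<pi>, of a] a by (auto simp: aligned_lin_def)
    then show "alignment_ind ?\<sigma> x (Suc n) + (alignment_ind ?\<sigma> a x - alignment_ind \<pi> a x)
          + (if x = a then 0 else alignment_ind ?\<sigma> x a - alignment_ind \<pi> x a)
        = alignment_gain n a (\<pi> a) x (\<pi> x)"
      using x a by (auto simp: alignment_ind_def alignment_gain_def cycle_insert_apply[OF \<pi>])
  qed
  finally show ?thesis .
qed

lemma deficiency_cycle_insert:
  assumes \<pi>: "\<pi> permutes {1..n}" and a: "a \<in> {1..n}"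
  shows "deficiency (Suc n) (cycle_insert n \<pi> a)
           = deficiency n \<pi> + (\<Sum>x\<in>{1..n}. deficiency_gain a (\<pi> a) x (\<pi> x))"
proof -
  have "(\<Sum>x\<in>{1..n}. deficiency_gain a (\<pi> a) x (\<pi> x))
      = (\<Sum>x\<in>{1..n}. bound_gain a (\<pi> a) x (\<pi> x)) - (\<Sum>x\<in>{1..n}. alignment_gain n a (\<pi> a) x (\<pi> x))"
    unfolding sum_subtractf[symmetric]
  proof (intro sum.cong refl)
    fix x assume x: "x \<in> {1..n}"
    have "x = a \<longleftrightarrow> \<pi> x = \<pi> a" using permutes_inj[OF \<pi>] by (auto dest: injD)
    then show "deficiency_gain a (\<pi> a) x (\<pi> x) = bound_gain a (\<pi> a) x (\<pi> x) - alignment_gain n a (\<pi> a) x (\<pi> x)"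
      using bound_gain_minus_alignment_gain[of x "\<pi> x" a "\<pi> a" n] x a permutes_in_image[OF \<pi>] by auto
  qed
  then show ?thesis
    unfolding deficiency_def card_weak_excedences_cycle_insert[OF \<pi> a]
      alignment_count_cycle_insert[OF \<pi> a] sum_bound_gain[OF \<pi> a]
    by (cases "\<pi> a < a") (simp_all add: algebra_simps)
qed

lemma deficiency_cycle_insert_fixed:
  assumes \<pi>: "\<pi> permutes {1..n}"
  shows "deficiency (Suc n) (cycle_insert n \<pi> (Suc n)) = deficiency n \<pi>"
proof -
  have "alignment_ind \<pi> i (Suc n) = of_bool (\<pi> i < i)" if "i \<in> {1..n}" for i
  proof -
    have "\<pi> i \<le> n" "\<pi> (Suc n) = Suc n"
      using that permutes_in_image[OF \<pi>, of i] permutes_not_in[OF \<pi>, of "Suc n"] by auto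
    then show ?thesis using that by (auto simp: alignment_ind_def aligned_lin_def)
  qed
  then have "(\<Sum>i\<in>{1..n}. alignment_ind \<pi> i (Suc n)) = int n - int (card (weak_excedences n \<pi>))"
    unfolding sum_non_weak_excedences[symmetric] by (rule sum.cong[OF refl])
  then have "alignment_count (Suc n) \<pi> = alignment_count n \<pi> + (int n - int (card (weak_excedences n \<pi>)))"
    by (subst alignment_count_Suc) (simp only: alignment_count_def)
  then show ?thesis
    using card_weak_excedences_cycle_insert_fixed[OF \<pi>]
    by (simp add: deficiency_def algebra_simps cycle_insert_fixed)
qed

lemma deficiency_nonneg: "\<pi> permutes {1..n} \<Longrightarrow> deficiency n \<pi> \<ge> 0"
proof (induction n arbitrary: \<pi>)
  case 0
  then show ?case by (simp add: deficiency_def alignment_count_def weak_excedences_def)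
next
  case (Suc n)
  then obtain \<rho> a where \<rho>: "\<rho> permutes {1..n}" and a: "a \<in> {1..Suc n}" and \<pi>: "\<pi> = cycle_insert n \<rho> a"
    using permutes_Suc_eq_cycle_insert by blast
  show ?case
  proof (cases "a = Suc n")
    case False
    then have "a \<in> {1..n}" using a by auto
    then show ?thesis
      using deficiency_cycle_insert[OF \<rho>] Suc.IH[OF \<rho>] deficiency_gain_nonneg
      by (simp add: \<pi> sum_nonneg add_nonneg_nonneg)
  qed (use deficiency_cycle_insert_fixed[OF \<rho>] Suc.IH[OF \<rho>] \<pi> in simp)
qed

definition admissible_sites :: "nat \<Rightarrow> (nat \<Rightarrow> nat) \<Rightarrow> nat set" where
  "admissible_sites n \<pi> = {a \<in> {1..n}. a \<le> \<pi> a \<and> (\<forall>x\<in>{1..n}. x < a \<longrightarrow> \<pi> x < \<pi> a)}"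

lemma deficiency_gains_eq_0_iff:
  assumes \<pi>: "\<pi> permutes {1..n}" and a: "a \<in> {1..n}"
  shows "(\<forall>x\<in>{1..n}. deficiency_gain a (\<pi> a) x (\<pi> x) = 0) \<longleftrightarrow> a \<in> admissible_sites n \<pi>"
proof (cases "\<pi> a < a")
  case True
  then have "deficiency_gain a (\<pi> a) a (\<pi> a) \<noteq> 0" by (simp add: deficiency_gain_def)
  then show ?thesis using True a by (auto simp: admissible_sites_def)
next
  case False
  have "\<pi> x \<noteq> \<pi> a" if "x < a" for x
    using that permutes_inj[OF \<pi>] by (auto dest: injD)
  then have "(\<forall>x\<in>{1..n}. x < a \<longrightarrow> \<not> \<pi> a < \<pi> x) \<longleftrightarrow> (\<forall>x\<in>{1..n}. x < a \<longrightarrow> \<pi> x < \<pi> a)"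
    by (meson linorder_neqE_nat order.asym)
  then show ?thesis using False a by (auto simp: deficiency_gain_def admissible_sites_def)
qed

lemma deficiency_cycle_insert_eq_0_iff:
  assumes \<pi>: "\<pi> permutes {1..n}" and a: "a \<in> {1..Suc n}"
  shows "deficiency (Suc n) (cycle_insert n \<pi> a) = 0
           \<longleftrightarrow> deficiency n \<pi> = 0 \<and> (a = Suc n \<or> a \<in> admissible_sites n \<pi>)"
proof (cases "a = Suc n")
  case False
  then have a': "a \<in> {1..n}" using a by auto
  have "(\<Sum>x\<in>{1..n}. deficiency_gain a (\<pi> a) x (\<pi> x)) = 0 \<longleftrightarrow> a \<in> admissible_sites n \<pi>"
    using deficiency_gains_eq_0_iff[OF \<pi> a'] by (simp add: sum_nonneg_eq_0_iff deficiency_gain_nonneg)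
  moreover have "0 \<le> (\<Sum>x\<in>{1..n}. deficiency_gain a (\<pi> a) x (\<pi> x))"
    by (simp add: sum_nonneg deficiency_gain_nonneg)
  ultimately show ?thesis
    using deficiency_cycle_insert[OF \<pi> a'] deficiency_nonneg[OF \<pi>] False by linarith
qed (use deficiency_cycle_insert_fixed[OF \<pi>] in simp)

lemma admissible_sites_cycle_insert:
  assumes \<pi>: "\<pi> permutes {1..n}" and a: "a \<in> {1..n}"
  shows "admissible_sites (Suc n) (cycle_insert n \<pi> a) = insert a (admissible_sites n \<pi> \<inter> {..<a})"
proof -
  have range: "\<pi> x \<in> {1..n}" if "x \<in> {1..n}" for x
    using that permutes_in_image[OF \<pi>] by simp
  have "w \<in> admissible_sites (Suc n) (cycle_insert n \<pi> a) \<longleftrightarrow> w \<in> insert a (admissible_sites n \<pi> \<inter> {..<a})"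
    for w
  proof (cases w a rule: linorder_cases)
    case less
    then show ?thesis using a by (auto simp: admissible_sites_def cycle_insert_apply[OF \<pi>])
  next
    case equal
    then show ?thesis using a range by (fastforce simp: admissible_sites_def cycle_insert_apply[OF \<pi>])
  next
    case greater
    have "w \<notin> admissible_sites (Suc n) (cycle_insert n \<pi> a)"
    proof
      assume w: "w \<in> admissible_sites (Suc n) (cycle_insert n \<pi> a)"
      then have "cycle_insert n \<pi> a a < cycle_insert n \<pi> a w" "w \<in> {1..Suc n}"
        using greater a by (auto simp: admissible_sites_def)
      then show False
        using a range[of a] range[of w] greater by (auto simp: cycle_insert_apply[OF \<pi>] split: if_splits)
    qed
    then show ?thesis using greater by simp
  qed
  then show ?thesis by blast
qed

lemma admissible_sites_cycle_insert_fixed: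
  assumes \<pi>: "\<pi> permutes {1..n}"
  shows "admissible_sites (Suc n) (cycle_insert n \<pi> (Suc n)) = insert (Suc n) (admissible_sites n \<pi>)"
proof -
  have "\<pi> x \<in> {1..n}" if "x \<in> {1..n}" for x
    using that permutes_in_image[OF \<pi>] by simp
  moreover have "\<pi> (Suc n) = Suc n" using permutes_not_in[OF \<pi>] by simp
  ultimately show ?thesis
    by (auto simp: admissible_sites_def le_Suc_eq cycle_insert_fixed less_Suc_eq_le)
qed

definition tight_count :: "nat \<Rightarrow> nat \<Rightarrow> nat \<Rightarrow> nat" where
  "tight_count n k v = card {\<pi>. \<pi> permutes {1..n} \<and> deficiency n \<pi> = 0
                              \<and> card (weak_excedences n \<pi>) = k \<and> card (admissible_sites n \<pi>) = v}"

lemma card_tight_cycle_inserts: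
  assumes \<pi>: "\<pi> permutes {1..n}" and j: "j \<ge> 1"
  shows "card {a \<in> {1..Suc n}. deficiency (Suc n) (cycle_insert n \<pi> a) = 0
                \<and> card (weak_excedences (Suc n) (cycle_insert n \<pi> a)) = k
                \<and> card (admissible_sites (Suc n) (cycle_insert n \<pi> a)) = j}
         = of_bool (deficiency n \<pi> = 0 \<and> card (weak_excedences n \<pi>) = k
                    \<and> j \<le> card (admissible_sites n \<pi>))
           + of_bool (deficiency n \<pi> = 0 \<and> card (weak_excedences n \<pi>) + 1 = k
                    \<and> card (admissible_sites n \<pi>) + 1 = j)"
    (is "card {a \<in> _. ?Q a} = of_bool ?old + of_bool ?new")
proof -
  define A where "A = admissible_sites n \<pi>"
  have A: "finite A" "A \<subseteq> {1..n}" by (auto simp: A_def admissible_sites_def)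
  have "?Q a \<longleftrightarrow> deficiency n \<pi> = 0 \<and> card (weak_excedences n \<pi>) = k \<and> a \<in> A
                 \<and> card (A \<inter> {..<a}) = j - 1" if a: "a \<in> {1..n}" for a
  proof -
    have "a \<in> A \<Longrightarrow> \<not> \<pi> a < a" by (auto simp: A_def admissible_sites_def)
    moreover have "card (insert a (A \<inter> {..<a})) = Suc (card (A \<inter> {..<a}))"
      using A by simp
    ultimately show ?thesis
      using a j deficiency_cycle_insert_eq_0_iff[OF \<pi>, of a]
      by (auto simp: card_weak_excedences_cycle_insert[OF \<pi> a] admissible_sites_cycle_insert[OF \<pi> a] A_def)
  qed
  then have low_set: "{a \<in> {1..n}. ?Q a}
      = (if deficiency n \<pi> = 0 \<and> card (weak_excedences n \<pi>) = k
         then {a \<in> A. card (A \<inter> {..<a}) = j - 1} else {})"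
    using A(2) by (auto simp: subset_eq)
  have low: "card {a \<in> {1..n}. ?Q a} = of_bool ?old"
    using card_rank_eq[OF A(1), of "j - 1"] j unfolding low_set A_def
    by (cases "deficiency n \<pi> = 0 \<and> card (weak_excedences n \<pi>) = k") auto
  have "Suc n \<notin> A" using A(2) by auto
  then have top: "?Q (Suc n) \<longleftrightarrow> ?new"
    using deficiency_cycle_insert_eq_0_iff[OF \<pi>, of "Suc n"] A(1)
    by (simp add: card_weak_excedences_cycle_insert_fixed[OF \<pi>] admissible_sites_cycle_insert_fixed[OF \<pi>]
        A_def)
  have "{a \<in> {1..Suc n}. ?Q a} = {a \<in> {1..n}. ?Q a} \<union> (if ?Q (Suc n) then {Suc n} else {})"
    by (auto simp: le_Suc_eq)
  then have "card {a \<in> {1..Suc n}. ?Q a} = card {a \<in> {1..n}. ?Q a} + of_bool (?Q (Suc n))"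
    by (simp add: card_Un_disjoint)
  then show ?thesis by (simp only: low top)
qed

lemma card_tight_admissible_ge:
  "card {\<pi>. \<pi> permutes {1..n} \<and> deficiency n \<pi> = 0 \<and> card (weak_excedences n \<pi>) = k
            \<and> j \<le> card (admissible_sites n \<pi>)}
     = (\<Sum>v\<in>{j..n}. tight_count n k v)"
proof -
  have "card (admissible_sites n \<pi>) \<le> n" for \<pi>
  proof -
    have "admissible_sites n \<pi> \<subseteq> {1..n}" by (auto simp: admissible_sites_def)
    then show ?thesis using card_mono[of "{1..n}"] by fastforce
  qed
  then have eq: "{\<pi>. \<pi> permutes {1..n} \<and> deficiency n \<pi> = 0 \<and> card (weak_excedences n \<pi>) = k
                 \<and> j \<le> card (admissible_sites n \<pi>)}
      = (\<Union>v\<in>{j..n}. {\<pi>. \<pi> permutes {1..n} \<and> deficiency n \<pi> = 0 \<and> card (weak_excedences n \<pi>) = k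
                          \<and> card (admissible_sites n \<pi>) = v})"
    by auto
  show ?thesis
    unfolding eq tight_count_def by (rule card_UN_disjoint) (auto simp: finite_permutations)
qed

lemma tight_count_Suc:
  assumes "k \<ge> 1" "j \<ge> 1"
  shows "tight_count (Suc n) k j = (\<Sum>v\<in>{j..n}. tight_count n k v) + tight_count n (k - 1) (j - 1)"
proof -
  let ?P = "{\<pi>. \<pi> permutes {1..n}}"
  have "tight_count (Suc n) k j
      = (\<Sum>\<pi>\<in>?P. of_bool (deficiency n \<pi> = 0 \<and> card (weak_excedences n \<pi>) = k
                             \<and> j \<le> card (admissible_sites n \<pi>))
                 + of_bool (deficiency n \<pi> = 0 \<and> card (weak_excedences n \<pi>) + 1 = k
                             \<and> card (admissible_sites n \<pi>) + 1 = j))"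
    unfolding tight_count_def card_permutes_Suc_filter
    by (intro sum.cong refl card_tight_cycle_inserts[OF _ assms(2)]) simp
  also have "\<dots> = card {\<pi>. \<pi> permutes {1..n} \<and> deficiency n \<pi> = 0 \<and> card (weak_excedences n \<pi>) = k
                         \<and> j \<le> card (admissible_sites n \<pi>)}
                 + card {\<pi>. \<pi> permutes {1..n} \<and> deficiency n \<pi> = 0 \<and> card (weak_excedences n \<pi>) + 1 = k
                         \<and> card (admissible_sites n \<pi>) + 1 = j}"
    by (simp add: sum.distrib finite_permutations Int_def)
  also have "{\<pi>. \<pi> permutes {1..n} \<and> deficiency n \<pi> = 0 \<and> card (weak_excedences n \<pi>) + 1 = k
                \<and> card (admissible_sites n \<pi>) + 1 = j}
      = {\<pi>. \<pi> permutes {1..n} \<and> deficiency n \<pi> = 0 \<and> card (weak_excedences n \<pi>) = k - 1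
                \<and> card (admissible_sites n \<pi>) = j - 1}"
    using assms by auto
  finally show ?thesis by (simp only: card_tight_admissible_ge tight_count_def)
qed

lemma one_mem_weak_excedences_admissible_sites:
  assumes "\<sigma> permutes {1..Suc n}"
  shows "1 \<in> weak_excedences (Suc n) \<sigma>" "1 \<in> admissible_sites (Suc n) \<sigma>"
  using permutes_in_image[OF assms, of 1] by (auto simp: weak_excedences_def admissible_sites_def)

lemma tight_count_Suc_eq_0:
  "tight_count (Suc n) 0 j = 0" "tight_count (Suc n) k 0 = 0"
proof -
  have "finite (weak_excedences (Suc n) \<sigma>)" "finite (admissible_sites (Suc n) \<sigma>)" for \<sigma>
    by (auto simp: weak_excedences_def admissible_sites_def)
  then have "card (weak_excedences (Suc n) \<sigma>) \<noteq> 0" "card (admissible_sites (Suc n) \<sigma>) \<noteq> 0"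
    if "\<sigma> permutes {1..Suc n}" for \<sigma>
    using one_mem_weak_excedences_admissible_sites[OF that] by (auto simp: card_eq_0_iff)
  then have "{\<pi>. \<pi> permutes {1..Suc n} \<and> deficiency (Suc n) \<pi> = 0
               \<and> card (weak_excedences (Suc n) \<pi>) = 0 \<and> card (admissible_sites (Suc n) \<pi>) = j} = {}"
    "{\<pi>. \<pi> permutes {1..Suc n} \<and> deficiency (Suc n) \<pi> = 0
               \<and> card (weak_excedences (Suc n) \<pi>) = k \<and> card (admissible_sites (Suc n) \<pi>) = 0} = {}"
    by blast+
  then show "tight_count (Suc n) 0 j = 0" "tight_count (Suc n) k 0 = 0"
    unfolding tight_count_def by (simp_all only: card.empty)
qed

lemma tight_count_0: "tight_count 0 k v = of_bool (k = 0 \<and> v = 0)"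
proof -
  have "{\<pi>. \<pi> permutes {1..0::nat}} = {id}" by auto
  moreover have "deficiency 0 id = 0" "weak_excedences 0 id = {}" "admissible_sites 0 id = {}"
    by (auto simp: deficiency_def alignment_count_def weak_excedences_def admissible_sites_def)
  ultimately have "{\<pi>. \<pi> permutes {1..0} \<and> deficiency 0 \<pi> = 0 \<and> card (weak_excedences 0 \<pi>) = k
                      \<and> card (admissible_sites 0 \<pi>) = v} = (if k = 0 \<and> v = 0 then {id} else {})"
    by auto
  then show ?thesis unfolding tight_count_def by simp
qed

(* gchoose rather than choose: the upper index is -1 at v = n, where Pascal's rule
   is still needed. *)
definition tight_formula :: "nat \<Rightarrow> nat \<Rightarrow> nat \<Rightarrow> real" where
  "tight_formula n k v =
     (if v \<le> k then real v / real n * real (n choose k) * ((real n - real v - 1) gchoose (k - v)) else 0)"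

lemma real_Suc_choose:
  assumes "k \<ge> 1"
  shows "real (Suc n choose k) = real (Suc n) * real (n choose (k - 1)) / real k"
proof -
  have "k * (Suc n choose k) = Suc n * (n choose (k - 1))"
    using times_binomial_minus1_eq[of k "Suc n"] assms by simp
  then have "real k * real (Suc n choose k) = real (Suc n) * real (n choose (k - 1))"
    by (simp only: of_nat_mult[symmetric])
  then show ?thesis using assms by (simp add: field_simps del: of_nat_Suc)
qed

lemma real_choose_eq_pred:
  assumes "k \<ge> 1"
  shows "real (n choose k) = (real n + 1 - real k) * real (n choose (k - 1)) / real k"
proof (cases "k \<le> Suc n")
  case True
  have "k * (n choose k) = (n - (k - 1)) * (n choose (k - 1))"
    using times_binomial_minus1_eq[of k n] binomial_absorb_comp[of n "k - 1"] assms by simp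
  then have "real k * real (n choose k) = real (n - (k - 1)) * real (n choose (k - 1))"
    by (simp only: of_nat_mult[symmetric])
  then show ?thesis using True assms by (simp add: field_simps of_nat_diff)
qed (simp add: binomial_eq_0)

lemma tight_formula_step_lt:
  assumes n: "n \<ge> 1" and j: "1 \<le> j" and jk: "j < k"
  shows "tight_formula (Suc n) k j - tight_formula n (k - 1) (j - 1)
           = tight_formula n k j + (tight_formula (Suc n) k (Suc j) - tight_formula n (k - 1) j)"
proof -
  obtain r where kjr: "k = j + Suc r" using jk by (metis add_Suc_right less_imp_Suc_add)
  define X where "X = real (n choose (k - 1))"
  define y where "y = real n - real j - 1"
  define A where "A = y gchoose r"
  define B where "B = y gchoose Suc r"
  have AB: "(real k - real j) * B = (real n - real k) * A"
    using gbinomial_mult_1[of y r] unfolding A_def B_def y_def kjr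
    by (simp add: algebra_simps)
  have "(real (Suc n) - real j - 1) gchoose (k - j) = A + B"
    "(real n - real (j - 1) - 1) gchoose (k - 1 - (j - 1)) = A + B"
    using j gbinomial_Suc_Suc[of y r] by (simp_all add: A_def B_def y_def kjr of_nat_diff algebra_simps)
  moreover have "(real n - real j - 1) gchoose (k - j) = B"
    "(real (Suc n) - real (Suc j) - 1) gchoose (k - Suc j) = A"
    "(real n - real j - 1) gchoose (k - 1 - j) = A"
    by (simp_all add: A_def B_def y_def kjr)
  ultimately have t: "tight_formula (Suc n) k j = real j / real (Suc n) * real (Suc n choose k) * (A + B)"
    "tight_formula n (k - 1) (j - 1) = (real j - 1) / real n * X * (A + B)"
    "tight_formula n k j = real j / real n * real (n choose k) * B"
    "tight_formula (Suc n) k (Suc j) = (real j + 1) / real (Suc n) * real (Suc n choose k) * A"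
    "tight_formula n (k - 1) j = real j / real n * X * A"
    using jk j unfolding tight_formula_def X_def
    by (simp_all add: of_nat_diff le_diff_conv2 Suc_le_eq)
  have k: "k \<ge> 1" using jk by simp
  have "real (Suc n choose k) = real (Suc n) * X / real k"
    "real (n choose k) = (real n + 1 - real k) * X / real k"
    unfolding X_def by (rule real_Suc_choose[OF k], rule real_choose_eq_pred[OF k])
  moreover have "real k \<noteq> 0" "real n \<noteq> 0" "real (Suc n) \<noteq> 0" using n k by auto
  ultimately have "tight_formula (Suc n) k j - tight_formula n (k - 1) (j - 1)
      - (tight_formula n k j + (tight_formula (Suc n) k (Suc j) - tight_formula n (k - 1) j))
      = X / (real n * real k) * ((real k - real n) * A + (real k - real j) * B)"
    unfolding t by (simp only:) (simp add: field_simps del: of_nat_Suc)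
  moreover have "(real k - real n) * A + (real k - real j) * B = 0"
    using AB by (simp add: algebra_simps)
  ultimately show ?thesis by simp
qed

lemma tight_formula_step:
  assumes n: "n \<ge> 1" and j: "1 \<le> j" and k: "k \<ge> 1"
  shows "tight_formula (Suc n) k j - tight_formula n (k - 1) (j - 1)
           = tight_formula n k j + (tight_formula (Suc n) k (Suc j) - tight_formula n (k - 1) j)"
proof (cases k j rule: linorder_cases)
  case less
  then show ?thesis unfolding tight_formula_def by auto
next
  case equal
  define X where "X = real (n choose (k - 1))"
  have "tight_formula (Suc n) k j = real k / real (Suc n) * real (Suc n choose k)"
    "tight_formula n k j = real k / real n * real (n choose k)"
    "tight_formula (Suc n) k (Suc j) = 0"
    "tight_formula n (k - 1) (j - 1) = (real k - 1) / real n * X"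
    "tight_formula n (k - 1) j = 0"
    using equal j by (simp_all add: tight_formula_def X_def of_nat_diff le_diff_conv2)
  moreover have "real (Suc n choose k) = real (Suc n) * X / real k"
    "real (n choose k) = (real n + 1 - real k) * X / real k"
    unfolding X_def by (rule real_Suc_choose[OF k], rule real_choose_eq_pred[OF k])
  moreover have "real k \<noteq> 0" "real n \<noteq> 0" "real (Suc n) \<noteq> 0" using n k by auto
  ultimately show ?thesis by (simp only:) (simp add: field_simps del: of_nat_Suc)
next
  case greater
  then show ?thesis using tight_formula_step_lt[OF n j] by simp
qed

lemma tight_formula_beyond:
  assumes "Suc n < j" "k \<ge> 1"
  shows "tight_formula (Suc n) k j = 0" "tight_formula n (k - 1) (j - 1) = 0"
  using assms by (auto simp: tight_formula_def binomial_eq_0)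

lemma sum_tight_formula:
  assumes n: "n \<ge> 1" and k: "k \<ge> 1" and j: "j \<ge> 1"
  shows "(\<Sum>v\<in>{j..n}. tight_formula n k v) = tight_formula (Suc n) k j - tight_formula n (k - 1) (j - 1)"
proof (cases "j \<le> Suc n")
  case True
  then show ?thesis
    using j
  proof (induction j rule: inc_induct)
    case base
    have "tight_formula (Suc n) k (Suc n) = tight_formula n (k - 1) n"
      using n by (cases k "Suc n" rule: linorder_cases) (auto simp: tight_formula_def binomial_eq_0)
    then show ?case by simp
  next
    case (step m)
    have "{m..n} = insert m {Suc m..n}" using step.hyps by auto
    then have "(\<Sum>v\<in>{m..n}. tight_formula n k v) = tight_formula n k m + (\<Sum>v\<in>{Suc m..n}. tight_formula n k v)"
      by simp
    also have "\<dots> = tight_formula (Suc n) k m - tight_formula n (k - 1) (m - 1)"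
      using step tight_formula_step[OF n _ k, of m] by simp
    finally show ?case .
  qed
qed (use tight_formula_beyond k in simp)

lemma tight_count_eq_tight_formula:
  "real (tight_count (Suc n) k v) = tight_formula (Suc n) k v"
proof (induction n arbitrary: k v)
  case 0
  show ?case
  proof (cases "k = 0 \<or> v = 0")
    case False
    then show ?thesis
      by (auto simp: tight_count_Suc tight_count_0 tight_formula_def binomial_eq_0 le_Suc_eq)
  qed (auto simp: tight_count_Suc_eq_0 tight_formula_def)
next
  case (Suc n)
  show ?case
  proof (cases "k = 0 \<or> v = 0")
    case False
    then have "tight_count (Suc (Suc n)) k v
        = (\<Sum>w\<in>{v..Suc n}. tight_count (Suc n) k w) + tight_count (Suc n) (k - 1) (v - 1)"
      by (intro tight_count_Suc) auto
    then have "real (tight_count (Suc (Suc n)) k v)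
        = (\<Sum>w\<in>{v..Suc n}. tight_formula (Suc n) k w) + tight_formula (Suc n) (k - 1) (v - 1)"
      by (simp only: of_nat_add of_nat_sum Suc.IH)
    also have "(\<Sum>w\<in>{v..Suc n}. tight_formula (Suc n) k w)
        = tight_formula (Suc (Suc n)) k v - tight_formula (Suc n) (k - 1) (v - 1)"
      using False by (intro sum_tight_formula) auto
    finally show ?thesis by simp
  qed (auto simp: tight_count_Suc_eq_0 tight_formula_def)
qed

lemma tight_formula_eq_narayana:
  assumes "1 \<le> k" "k \<le> n"
  shows "tight_formula (Suc n) k 1 = narayana k n"
proof -
  have "(real (Suc n) - real 1 - 1) gchoose (k - 1) = real ((n - 1) choose (k - 1))"
    using assms by (simp add: binomial_gbinomial of_nat_diff)
  then have t: "tight_formula (Suc n) k 1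
      = 1 / real (Suc n) * real (Suc n choose k) * real ((n - 1) choose (k - 1))"
    unfolding tight_formula_def using assms by simp
  have "k * (n choose k) = n * ((n - 1) choose (k - 1))"
    using times_binomial_minus1_eq[of k n] assms by simp
  then have c: "real (n choose k) = real n * real ((n - 1) choose (k - 1)) / real k"
    using assms by (simp add: field_simps flip: of_nat_mult)
  have "real k \<noteq> 0" "real n \<noteq> 0" using assms by auto
  then show ?thesis
    unfolding t real_Suc_choose[OF assms(1)] narayana_def c by (simp add: field_simps del: of_nat_Suc)
qed

lemma card_tight_eq_narayana:
  assumes "1 \<le> k" "k \<le> n"
  shows "real (card {\<pi>. \<pi> permutes {1..n} \<and> deficiency n \<pi> = 0 \<and> card (weak_excedences n \<pi>) = k})
           = narayana k n"
proof -
  obtain m where n: "n = Suc m" using assms by (cases n) auto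
  have "real (card {\<pi>. \<pi> permutes {1..n} \<and> deficiency n \<pi> = 0 \<and> card (weak_excedences n \<pi>) = k})
      = (\<Sum>v\<in>{0..n}. real (tight_count n k v))"
    using card_tight_admissible_ge[of n k 0] by simp
  also have "\<dots> = tight_formula n k 0 + (\<Sum>v\<in>{1..n}. tight_formula n k v)"
    unfolding n tight_count_eq_tight_formula by (simp add: atLeast0_atMost_Suc_eq_insert_0 sum.atLeast_Suc_atMost)
  also have "\<dots> = tight_formula (Suc n) k 1"
    using sum_tight_formula[of n k 1] assms by (simp add: tight_formula_def)
  finally show ?thesis using tight_formula_eq_narayana[OF assms] by simp
qed

theorem mainTheorem14:
  fixes k n :: nat
  assumes "1 \<le> k" and "k \<le> n"
  shows "(\<forall>\<pi>. \<pi> permutes {1..n} \<and> card (weak_excedences n \<pi>) = k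
            \<longrightarrow> num_alignments n \<pi> \<le> (k - 1) * (n - k))
       \<and> (\<exists>\<pi>. \<pi> permutes {1..n} \<and> card (weak_excedences n \<pi>) = k
            \<and> num_alignments n \<pi> = (k - 1) * (n - k))
       \<and> real (card {\<pi>. \<pi> permutes {1..n} \<and> card (weak_excedences n \<pi>) = k
            \<and> num_alignments n \<pi> = (k - 1) * (n - k)}) = narayana k n"
proof -
  have deficiency_eq: "deficiency n \<pi> = int ((k - 1) * (n - k)) - int (num_alignments n \<pi>)"
    if "\<pi> permutes {1..n}" "card (weak_excedences n \<pi>) = k" for \<pi>
    using that assms by (simp add: deficiency_def num_alignments_eq_alignment_count of_nat_diff)
  have bound: "num_alignments n \<pi> \<le> (k - 1) * (n - k)"
    if "\<pi> permutes {1..n}" "card (weak_excedences n \<pi>) = k" for \<pi>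
    using deficiency_eq[OF that] deficiency_nonneg[OF that(1)] by linarith
  have "num_alignments n \<pi> = (k - 1) * (n - k) \<longleftrightarrow> deficiency n \<pi> = 0"
    if "\<pi> permutes {1..n}" "card (weak_excedences n \<pi>) = k" for \<pi>
    using deficiency_eq[OF that] by (auto simp del: of_nat_mult)
  then have "{\<pi>. \<pi> permutes {1..n} \<and> card (weak_excedences n \<pi>) = k \<and> num_alignments n \<pi> = (k - 1) * (n - k)}
      = {\<pi>. \<pi> permutes {1..n} \<and> deficiency n \<pi> = 0 \<and> card (weak_excedences n \<pi>) = k}"
    by blast
  then have count: "real (card {\<pi>. \<pi> permutes {1..n} \<and> card (weak_excedences n \<pi>) = k
                                 \<and> num_alignments n \<pi> = (k - 1) * (n - k)}) = narayana k n"
    using card_tight_eq_narayana[OF assms] by simp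
  moreover have "narayana k n > 0" using assms by (simp add: narayana_def)
  ultimately have "card {\<pi>. \<pi> permutes {1..n} \<and> card (weak_excedences n \<pi>) = k
                          \<and> num_alignments n \<pi> = (k - 1) * (n - k)} \<noteq> 0"
    by auto
  then have "{\<pi>. \<pi> permutes {1..n} \<and> card (weak_excedences n \<pi>) = k
               \<and> num_alignments n \<pi> = (k - 1) * (n - k)} \<noteq> {}"
    by (metis card.empty)
  then show ?thesis using bound count by blast
qed

end
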